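(* Let $k\ge1$ be an integer, $a\in\mathbb{R}$ with $0<|a|<1$, $\sigma>0$, and let $\{\alpha_n\}$ be a sequence of real numbers with $|\alpha_n|\le\sigma$ for all $n$. If $$\sigma<\frac{1-|a|}{1-|a|^k},$$ then every real solution of $$x_{n+1}=ax_n+\alpha_n\tanh\big(x_n-a^kx_{n-k}\big),\quad n\ge0,$$ converges to $0$.
   Context: Solutions are generated by iteration from arbitrary real initial values $x_0,x_{-1},\dots,x_{-k}$. *)

theory Defs
  imports Complex_Main
begin

end

theory Submission imports Defs begin

(*
  Write  d(m) = x(m) - a x(m-1)  for the defect of x from the linear recurrence
  x(m) = a x(m-1).  The proof has three steps.
  1. Telescoping gives  x(n) - a^k x(n-k) = sum_{j<k} a^j d(n-j), and since
     |tanh t| <= |t| and |alpha_n| <= sigma, the defects satisfy the delay inequality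
        |d(n+1)| <= sum_{j<k} sigma |a|^j |d(n-j)|.
  2. A nonnegative sequence obeying a delay inequality whose weights sum to
     q < 1 decays geometrically (compare it with C r^p where r^k >= q).
     The hypothesis on sigma says exactly  sigma * sum_{j<k} |a|^j < 1.
  3. If |a| < 1 and |y(n+1) - a y(n)| <= C r^n with r < 1, then y tends to 0,
     being dominated by K rho^n for any rho strictly between max r |a| and 1.
  The main theorem combines the three steps after re-indexing the defects.
*)

lemma tanh_le_self:
  fixes t :: real
  assumes "0 \<le> t"
  shows "tanh t \<le> t"
proof -
  have "(\<lambda>s. s - tanh s) 0 \<le> (\<lambda>s. s - tanh s) t"
  proof (rule DERIV_nonneg_imp_nondecreasing[OF assms])
    fix s :: real
    have "cosh s \<noteq> 0" by (metis cosh_real_pos less_irrefl)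
    then have "((\<lambda>s. s - tanh s) has_field_derivative 1 - (1 - tanh s ^ 2)) (at s)"
      by (intro derivative_eq_intros) auto
    then show "\<exists>y. ((\<lambda>s. s - tanh s) has_field_derivative y) (at s) \<and> y \<ge> 0" by force
  qed
  then show ?thesis by simp
qed

lemma abs_tanh_le_abs: "\<bar>tanh (t::real)\<bar> \<le> \<bar>t\<bar>"
  using tanh_le_self[of "\<bar>t\<bar>"] by (metis abs_ge_zero tanh_real_abs)

definition defect :: "'a::comm_ring \<Rightarrow> (int \<Rightarrow> 'a) \<Rightarrow> int \<Rightarrow> 'a" where
  "defect a x m = x m - a * x (m - 1)"

lemma delayed_difference_telescope:
  fixes x :: "int \<Rightarrow> 'a::comm_ring_1"
  shows "x m - a ^ k * x (m - int k) = (\<Sum>j<k. a ^ j * defect a x (m - int j))"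
proof (induction k)
  case 0
  then show ?case by simp
next
  case (Suc k)
  then show ?case by (simp add: defect_def algebra_simps)
qed

lemma defect_delay_inequality:
  fixes a \<sigma> :: real and \<alpha> :: "nat \<Rightarrow> real" and x :: "int \<Rightarrow> real"
  assumes bound: "\<bar>\<alpha> n\<bar> \<le> \<sigma>"
    and rec: "x (int n + 1) = a * x (int n) + \<alpha> n * tanh (x (int n) - a ^ k * x (int n - int k))"
  shows "\<bar>defect a x (int n + 1)\<bar> \<le> (\<Sum>j<k. \<sigma> * \<bar>a\<bar> ^ j * \<bar>defect a x (int n - int j)\<bar>)"
proof -
  let ?u = "x (int n) - a ^ k * x (int n - int k)"
  have "\<sigma> \<ge> 0" using bound by linarith
  have "\<bar>defect a x (int n + 1)\<bar> = \<bar>\<alpha> n\<bar> * \<bar>tanh ?u\<bar>"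
    using rec by (simp add: defect_def abs_mult)
  also have "\<dots> \<le> \<sigma> * \<bar>?u\<bar>"
    using bound abs_tanh_le_abs by (intro mult_mono) auto
  also have "\<bar>?u\<bar> \<le> (\<Sum>j<k. \<bar>a\<bar> ^ j * \<bar>defect a x (int n - int j)\<bar>)"
    unfolding delayed_difference_telescope
    by (rule order_trans[OF sum_abs]) (simp add: abs_mult power_abs)
  finally show ?thesis
    using \<open>\<sigma> \<ge> 0\<close> by (simp add: mult_left_mono sum_distrib_left mult.assoc)
qed

lemma delay_inequality_geometric_decay:
  fixes e w :: "nat \<Rightarrow> real"
  assumes "k \<ge> 1"
    and w_nonneg: "\<And>j. w j \<ge> 0"
    and w_sum: "(\<Sum>j<k. w j) < 1"
    and e_nonneg: "\<And>p. e p \<ge> 0"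
    and delay: "\<And>p. k \<le> p \<Longrightarrow> e p \<le> (\<Sum>j<k. w j * e (p - 1 - j))"
  shows "\<exists>C r. 0 < r \<and> r < 1 \<and> (\<forall>p. e p \<le> C * r ^ p)"
proof -
  define q where "q = max (\<Sum>j<k. w j) (1/2)"
  define r where "r = root k q"
  have q: "0 < q" "q < 1" unfolding q_def using w_sum by auto
  have r: "0 < r" "r < 1" "r ^ k = q"
    unfolding r_def using \<open>k \<ge> 1\<close> q by (auto simp: real_root_gt_zero)
  define C where "C = (\<Sum>p<k. e p / r ^ p)"
  have "e p \<le> C * r ^ p" for p
  proof (induction p rule: less_induct)
    case (less p)
    show ?case
    proof (cases "p < k")
      case True
      have "e p / r ^ p \<le> C"
        unfolding C_def using True e_nonneg r by (intro member_le_sum) auto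
      then show ?thesis using r by (simp add: divide_le_eq mult.commute)
    next
      case False
      have prev: "e (p - 1 - j) \<le> C * r ^ (p - k)" if "j < k" for j
      proof -
        have "e (p - 1 - j) \<le> C * r ^ (p - 1 - j)" using less False that by auto
        also have "\<dots> \<le> C * r ^ (p - k)"
        proof -
          have "C \<ge> 0" unfolding C_def using e_nonneg r by (intro sum_nonneg) auto
          then show ?thesis using r that by (intro mult_left_mono power_decreasing) auto
        qed
        finally show ?thesis .
      qed
      have "e p \<le> (\<Sum>j<k. w j * e (p - 1 - j))" using delay False by simp
      also have "\<dots> \<le> (\<Sum>j<k. w j * (C * r ^ (p - k)))"
        using prev w_nonneg by (intro sum_mono mult_left_mono) auto
      also have "\<dots> = (\<Sum>j<k. w j) * (C * r ^ (p - k))" by (simp add: sum_distrib_right)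
      also have "\<dots> \<le> r ^ k * (C * r ^ (p - k))"
      proof (rule mult_right_mono)
        have "0 \<le> e (p - 1)" by (rule e_nonneg)
        also have "\<dots> \<le> C * r ^ (p - k)" using prev[of 0] \<open>k \<ge> 1\<close> by simp
        finally show "0 \<le> C * r ^ (p - k)" .
      qed (use r q_def in simp)
      also have "\<dots> = C * r ^ p"
        using False by (simp add: power_add[symmetric])
      finally show ?thesis .
    qed
  qed
  then show ?thesis using r by blast
qed

lemma perturbed_contraction_tendsto_zero:
  fixes a C r :: real and y :: "nat \<Rightarrow> real"
  assumes "\<bar>a\<bar> < 1" and "0 < r" and "r < 1"
    and step: "\<And>n. \<bar>y (Suc n) - a * y n\<bar> \<le> C * r ^ n"
  shows "y \<longlonglongrightarrow> 0"
proof -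
  define \<rho> where "\<rho> = (max r \<bar>a\<bar> + 1) / 2"
  have \<rho>: "\<rho> < 1" "r < \<rho>" "\<bar>a\<bar> < \<rho>"
    unfolding \<rho>_def using assms by auto
  have "C \<ge> 0" using order_trans[OF abs_ge_zero step[of 0]] by simp
  define K where "K = max \<bar>y 0\<bar> (C / (\<rho> - \<bar>a\<bar>))"
  have C_le: "C \<le> K * (\<rho> - \<bar>a\<bar>)"
  proof -
    have "C / (\<rho> - \<bar>a\<bar>) \<le> K" unfolding K_def by simp
    then show ?thesis using \<rho> by (simp add: pos_divide_le_eq)
  qed
  have dominated: "\<bar>y n\<bar> \<le> K * \<rho> ^ n" for n
  proof (induction n)
    case 0
    then show ?case unfolding K_def by simp
  next
    case (Suc n)
    have "\<bar>y (Suc n)\<bar> \<le> \<bar>a\<bar> * \<bar>y n\<bar> + C * r ^ n"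
      using abs_triangle_ineq[of "a * y n" "y (Suc n) - a * y n"] step[of n]
      by (simp add: abs_mult)
    also have "\<dots> \<le> \<bar>a\<bar> * (K * \<rho> ^ n) + C * \<rho> ^ n"
      using Suc assms \<rho> \<open>C \<ge> 0\<close> by (intro add_mono mult_left_mono power_mono) auto
    also have "\<dots> \<le> \<bar>a\<bar> * (K * \<rho> ^ n) + K * (\<rho> - \<bar>a\<bar>) * \<rho> ^ n"
      using C_le assms \<rho> by (intro add_left_mono mult_right_mono) auto
    also have "\<dots> = K * \<rho> ^ Suc n" by (simp add: algebra_simps)
    finally show ?case .
  qed
  have "(\<lambda>n. K * \<rho> ^ n) \<longlonglongrightarrow> 0"
    using \<rho> by (intro tendsto_mult_right_zero LIMSEQ_power_zero) auto
  then show ?thesis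
  proof (rule tendsto_0_le[where K = 1])
    have "0 \<le> K" "0 < \<rho>" using \<rho> by (auto simp: K_def)
    then show "\<forall>\<^sub>F n in sequentially. norm (y n) \<le> norm (K * \<rho> ^ n) * 1"
      using dominated by (simp add: abs_mult)
  qed
qed

lemma weight_sum_lt_one:
  fixes a \<sigma> :: real
  assumes "k \<ge> 1" and "\<bar>a\<bar> < 1" and "\<sigma> < (1 - \<bar>a\<bar>) / (1 - \<bar>a\<bar> ^ k)"
  shows "(\<Sum>j<k. \<sigma> * \<bar>a\<bar> ^ j) < 1"
proof -
  have "\<bar>a\<bar> ^ k < 1" using assms by (simp add: power_less_one_iff)
  then have "\<sigma> * (1 - \<bar>a\<bar> ^ k) < 1 - \<bar>a\<bar>"
    using assms(3) by (simp add: pos_less_divide_eq)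
  then show ?thesis
    using assms(2) sum_gp_strict[of "\<bar>a\<bar>" k]
    by (simp add: sum_distrib_left[symmetric] pos_divide_less_eq)
qed

theorem mainTheorem8:
  fixes k :: nat and a \<sigma> :: real and \<alpha> :: "nat \<Rightarrow> real" and x :: "int \<Rightarrow> real"
  assumes "k \<ge> 1"
    and "0 < \<bar>a\<bar>" and "\<bar>a\<bar> < 1"
    and "\<sigma> > 0"
    and "\<And>n. \<bar>\<alpha> n\<bar> \<le> \<sigma>"
    and "\<sigma> < (1 - \<bar>a\<bar>) / (1 - \<bar>a\<bar> ^ k)"
    and "\<And>n::nat. x (int n + 1) = a * x (int n) + \<alpha> n * tanh (x (int n) - a ^ k * x (int n - int k))"
  shows "(\<lambda>n::nat. x (int n)) \<longlonglongrightarrow> 0"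
proof -
  (* shift the defects so that they are indexed from the start of the data *)
  define e where "e p = \<bar>defect a x (int p + 1 - int k)\<bar>" for p
  have delay: "e p \<le> (\<Sum>j<k. \<sigma> * \<bar>a\<bar> ^ j * e (p - 1 - j))" if "k \<le> p" for p
  proof -
    have shift: "int (p - k) + 1 = int p + 1 - int k" using that by simp
    have "e p = \<bar>defect a x (int (p - k) + 1)\<bar>" by (simp add: e_def shift)
    also have "\<dots> \<le> (\<Sum>j<k. \<sigma> * \<bar>a\<bar> ^ j * \<bar>defect a x (int (p - k) - int j)\<bar>)"
      by (rule defect_delay_inequality) (use assms in auto)
    also have "\<dots> = (\<Sum>j<k. \<sigma> * \<bar>a\<bar> ^ j * e (p - 1 - j))"
      using that by (intro sum.cong) (auto simp: e_def of_nat_diff algebra_simps)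
    finally show ?thesis .
  qed
  have "\<exists>C r. 0 < r \<and> r < 1 \<and> (\<forall>p. e p \<le> C * r ^ p)"
    by (rule delay_inequality_geometric_decay[OF assms(1) _ weight_sum_lt_one[OF assms(1,3,6)]])
      (use assms(4) delay in \<open>auto simp: e_def\<close>)
  then obtain C r where r: "0 < r" "r < 1" and decay: "\<And>p. e p \<le> C * r ^ p" by blast
  have "\<bar>x (int (Suc n)) - a * x (int n)\<bar> \<le> (C * r ^ k) * r ^ n" for n
    using decay[of "n + k"] by (simp add: e_def defect_def power_add add.commute mult.assoc)
  then show ?thesis
    by (intro perturbed_contraction_tendsto_zero[OF assms(3) r, where C = "C * r ^ k"]) simp
qed

end
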